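(* Let $\sigma\in\{1,-1\}$, let $U$ be an open subset of the Weyl upper half-plane, and let $\varphi:U\to\mathbb{C}$ be a $C^\infty$ function of the form $$\varphi(\rho,v)=\frac{-\sigma(\omega-v)\pm\sqrt{(\omega-v)^2+\sigma\rho^2}}{\rho}$$ for a fixed $\omega\in\mathbb{C}$ and a fixed continuous branch of the square root on $U$, with $\varphi\neq0$ and $\varphi^2+\sigma\neq0$ on $U$. Let $M$ be an invertible $n\times n$ matrix function on $U$ of class $C^2$ and let $A=M^{-1}dM$. Suppose there is an invertible $n\times n$ matrix function $X$ on $U$ of class $C^2$, with $X^{-1}$ of class $C^1$, satisfying the Breitenlohner–Maison linear system $$\varphi\,(dX+AX)=\star\, dX\quad\text{on }U.$$ Then $A$ satisfies the field equations $$d(\rho\,\star A)=0\quad\text{on }U.$$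
   Context: The Weyl upper half-plane is $\{(\rho,v)\in\mathbb{R}^2:\rho>0\}$. The Hodge star $\star$ acts on one-forms in $(\rho,v)$ (entrywise on matrix-valued one-forms, linearly over functions) by $\star d\rho=-\sigma\,dv$, $\star dv=d\rho$; $d$ is the exterior derivative in $(\rho,v)$. *)

theory Defs
  imports "HOL-Analysis.Analysis"
begin

text \<open>Points of the Weyl half-plane are pairs (rho, v) :: real \<times> real.
  Matrix functions are complex n\<times>n matrices, type complex^'n^'n.\<close>

definition weyl_half_plane :: "(real \<times> real) set" where
  "weyl_half_plane = {p. fst p > 0}"

definition pd_rho :: "(real \<times> real \<Rightarrow> 'a::real_normed_vector) \<Rightarrow> real \<times> real \<Rightarrow> 'a" where
  "pd_rho f p = vector_derivative (\<lambda>t. f (t, snd p)) (at (fst p))"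

definition pd_v :: "(real \<times> real \<Rightarrow> 'a::real_normed_vector) \<Rightarrow> real \<times> real \<Rightarrow> 'a" where
  "pd_v f p = vector_derivative (\<lambda>t. f (fst p, t)) (at (snd p))"

fun Ck_on :: "nat \<Rightarrow> (real \<times> real) set \<Rightarrow> (real \<times> real \<Rightarrow> 'a::real_normed_vector) \<Rightarrow> bool" where
  "Ck_on 0 U f = continuous_on U f"
| "Ck_on (Suc k) U f = ((\<forall>p\<in>U. f differentiable (at p))
      \<and> Ck_on k U (pd_rho f) \<and> Ck_on k U (pd_v f))"

definition Cinf_on :: "(real \<times> real) set \<Rightarrow> (real \<times> real \<Rightarrow> 'a::real_normed_vector) \<Rightarrow> bool" where
  "Cinf_on U f = (\<forall>k. Ck_on k U f)"

text \<open>Matrix-valued one-forms  f d\<rho> + g dv  are represented by the pair (f, g).\<close>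
type_synonym ('n) mform = "(real \<times> real \<Rightarrow> complex^'n^'n) \<times> (real \<times> real \<Rightarrow> complex^'n^'n)"

definition d0 :: "(real \<times> real \<Rightarrow> complex^'n::finite^'n) \<Rightarrow> 'n mform" where
  "d0 f = (pd_rho f, pd_v f)"

text \<open>Exterior derivative of a one-form  f d\<rho> + g dv, as coefficient of d\<rho> \<and> dv.\<close>
definition d1 :: "('n::finite) mform \<Rightarrow> (real \<times> real \<Rightarrow> complex^'n^'n)" where
  "d1 w = (\<lambda>p. pd_rho (snd w) p - pd_v (fst w) p)"

text \<open>Hodge star: \<star>d\<rho> = -\<sigma> dv, \<star>dv = d\<rho>, linear over functions.\<close>
definition hodge :: "real \<Rightarrow> ('n::finite) mform \<Rightarrow> 'n mform" where
  "hodge \<sigma> w = (snd w, (\<lambda>p. - \<sigma> *\<^sub>R fst w p))"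

definition cmat :: "complex \<Rightarrow> complex^('n::finite)^'n \<Rightarrow> complex^'n^'n" where
  "cmat c A = (\<chi> i j. c * A $ i $ j)"

definition form_scale :: "(real \<times> real \<Rightarrow> complex) \<Rightarrow> ('n::finite) mform \<Rightarrow> 'n mform" where
  "form_scale h w = ((\<lambda>p. cmat (h p) (fst w p)), (\<lambda>p. cmat (h p) (snd w p)))"

definition form_rmult :: "('n::finite) mform \<Rightarrow> (real \<times> real \<Rightarrow> complex^'n::finite^'n) \<Rightarrow> 'n mform" where
  "form_rmult w X = ((\<lambda>p. fst w p ** X p), (\<lambda>p. snd w p ** X p))"

definition form_add :: "('n::finite) mform \<Rightarrow> 'n mform \<Rightarrow> 'n mform" where
  "form_add w w' = ((\<lambda>p. fst w p + fst w' p), (\<lambda>p. snd w p + snd w' p))"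

definition form_eq_on :: "(real \<times> real) set \<Rightarrow> ('n::finite) mform \<Rightarrow> 'n mform \<Rightarrow> bool" where
  "form_eq_on U w w' = (\<forall>p\<in>U. fst w p = fst w' p \<and> snd w p = snd w' p)"

definition maurer_cartan :: "(real \<times> real \<Rightarrow> complex^'n::finite^'n) \<Rightarrow> 'n mform" where
  "maurer_cartan M = ((\<lambda>p. matrix_inv (M p) ** pd_rho M p), (\<lambda>p. matrix_inv (M p) ** pd_v M p))"

end

theory Submission
  imports Defs
begin

text \<open>
  Put \<open>Z = X\<^sub>\<rho> X\<inverse>\<close>, \<open>W = X\<^sub>v X\<inverse>\<close> and \<open>b = 1/\<phi>\<close>. The linear system says precisely
  \<open>A\<^sub>\<rho> = b W - Z\<close> and \<open>A\<^sub>v = -\<sigma> b Z - W\<close>. Symmetry of the second derivatives of \<open>X\<close> gives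
  \<open>Z\<^sub>v - W\<^sub>\<rho> = [W, Z]\<close>, and symmetry of those of \<open>M\<close> gives the flatness
  \<open>\<partial>\<^sub>v A\<^sub>\<rho> - \<partial>\<^sub>\<rho> A\<^sub>v = [A\<^sub>\<rho>, A\<^sub>v]\<close>, where \<open>[A\<^sub>\<rho>, A\<^sub>v] = -(1 + \<sigma> b\<^sup>2) [W, Z]\<close>.
  Since \<open>b\<close> is a root of \<open>\<rho> b\<^sup>2 - 2 (\<omega> - v) b - \<sigma> \<rho>\<close>, differentiating this quadratic yields
  \<open>\<rho> (b\<^sup>2 + \<sigma>) b\<^sub>\<rho> = b (\<sigma> - b\<^sup>2)\<close> and \<open>\<rho> (b\<^sup>2 + \<sigma>) b\<^sub>v = -2 b\<^sup>2\<close>. With these, \<open>b\<close> times the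
  coefficient of \<open>d(\<rho> \<star>A)\<close> is a linear combination of the two integrability conditions, hence zero.
  Symmetry of mixed partials is needed in Young's form, assuming only that the first partials are
  differentiable at the point.
\<close>

lemma has_vector_derivative_horizontal:
  assumes "(f has_derivative D) (at (a + t, b))"
  shows "((\<lambda>s. f (a + s, b)) has_vector_derivative D (1, 0)) (at t)"
proof -
  have "((\<lambda>s. (a + s, b)) has_derivative (\<lambda>s. (s, 0))) (at t)"
    by (auto intro!: derivative_eq_intros)
  from has_derivative_compose[OF this assms]
  have "((\<lambda>s. f (a + s, b)) has_derivative (\<lambda>s. D (s *\<^sub>R (1, 0)))) (at t)"
    by (simp add: o_def)
  then show ?thesis
    unfolding has_vector_derivative_def linear_scale[OF has_derivative_linear[OF assms]] .
qed

lemma has_vector_derivative_vertical: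
  assumes "(f has_derivative D) (at (a, b + t))"
  shows "((\<lambda>s. f (a, b + s)) has_vector_derivative D (0, 1)) (at t)"
proof -
  have "((\<lambda>s. (a, b + s)) has_derivative (\<lambda>s. (0, s))) (at t)"
    by (auto intro!: derivative_eq_intros)
  from has_derivative_compose[OF this assms]
  have "((\<lambda>s. f (a, b + s)) has_derivative (\<lambda>s. D (s *\<^sub>R (0, 1)))) (at t)"
    by (simp add: o_def)
  then show ?thesis
    unfolding has_vector_derivative_def linear_scale[OF has_derivative_linear[OF assms]] .
qed

lemma pd_rho_eq: "(f has_derivative D) (at p) \<Longrightarrow> pd_rho f p = D (1, 0)"
  using has_vector_derivative_horizontal[of f D 0 "fst p" "snd p"]
  by (simp add: pd_rho_def vector_derivative_at)

lemma pd_v_eq: "(f has_derivative D) (at p) \<Longrightarrow> pd_v f p = D (0, 1)"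
  using has_vector_derivative_vertical[of f D "fst p" 0 "snd p"]
  by (simp add: pd_v_def vector_derivative_at)

lemma has_vector_derivative_pd_rho:
  "f differentiable (at (a + t, b)) \<Longrightarrow>
    ((\<lambda>s. f (a + s, b)) has_vector_derivative pd_rho f (a + t, b)) (at t)"
  by (metis differentiable_def has_vector_derivative_horizontal pd_rho_eq)

lemma pd_rho_cong_open:
  assumes "open S" "p \<in> S" "\<And>q. q \<in> S \<Longrightarrow> f q = g q"
  shows "pd_rho f p = pd_rho g p"
proof -
  have line_open: "open ((\<lambda>t. (t, snd p)) -` S)"
    by (intro continuous_open_vimage assms(1) continuous_intros)
  have "\<forall>\<^sub>F t in nhds (fst p). (t, snd p) \<in> S"
    using eventually_nhds_in_open[OF line_open, of "fst p"] assms(2) by simp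
  then show ?thesis
    unfolding pd_rho_def using assms(3)
    by (intro vector_derivative_cong_eq) (auto elim: eventually_mono)
qed

lemma pd_v_cong_open:
  assumes "open S" "p \<in> S" "\<And>q. q \<in> S \<Longrightarrow> f q = g q"
  shows "pd_v f p = pd_v g p"
proof -
  have line_open: "open ((\<lambda>t. (fst p, t)) -` S)"
    by (intro continuous_open_vimage assms(1) continuous_intros)
  have "\<forall>\<^sub>F t in nhds (snd p). (fst p, t) \<in> S"
    using eventually_nhds_in_open[OF line_open, of "snd p"] assms(2) by simp
  then show ?thesis
    unfolding pd_v_def using assms(3)
    by (intro vector_derivative_cong_eq) (auto elim: eventually_mono)
qed

lemma pd_rho_const [simp]: "pd_rho (\<lambda>q. c) p = 0"
  by (simp add: pd_rho_def)

lemma pd_v_const [simp]: "pd_v (\<lambda>q. c) p = 0"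
  by (simp add: pd_v_def)

lemma pd_rho_of_real_fst [simp]: "pd_rho (\<lambda>q. of_real (fst q)) p = 1"
  by (rule pd_rho_eq[of _ "\<lambda>h. of_real (fst h)", THEN trans]) (auto intro!: derivative_eq_intros)

lemma pd_v_of_real_fst [simp]: "pd_v (\<lambda>q. of_real (fst q)) p = 0"
  by (rule pd_v_eq[of _ "\<lambda>h. of_real (fst h)", THEN trans]) (auto intro!: derivative_eq_intros)

lemma differentiable_transform_open:
  assumes "f differentiable (at p)" "open S" "p \<in> S" "\<And>q. q \<in> S \<Longrightarrow> f q = g q"
  shows "g differentiable (at p)"
  using assms has_derivative_transform_within_open unfolding differentiable_def by blast

lemma pd_rho_diff:
  assumes "f differentiable (at p)" "g differentiable (at p)"
  shows "pd_rho (\<lambda>q. f q - g q) p = pd_rho f p - pd_rho g p"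
proof -
  obtain Df Dg where "(f has_derivative Df) (at p)" "(g has_derivative Dg) (at p)"
    using assms unfolding differentiable_def by blast
  from has_derivative_diff[OF this] pd_rho_eq[OF this(1)] pd_rho_eq[OF this(2)] show ?thesis
    by (simp add: pd_rho_eq)
qed

lemma pd_v_diff:
  assumes "f differentiable (at p)" "g differentiable (at p)"
  shows "pd_v (\<lambda>q. f q - g q) p = pd_v f p - pd_v g p"
proof -
  obtain Df Dg where "(f has_derivative Df) (at p)" "(g has_derivative Dg) (at p)"
    using assms unfolding differentiable_def by blast
  from has_derivative_diff[OF this] pd_v_eq[OF this(1)] pd_v_eq[OF this(2)] show ?thesis
    by (simp add: pd_v_eq)
qed

lemma (in bounded_linear) pd_rho:
  assumes "g differentiable (at p)"
  shows "pd_rho (\<lambda>q. f (g q)) p = f (pd_rho g p)"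
proof -
  obtain D where "(g has_derivative D) (at p)" using assms unfolding differentiable_def by blast
  from has_derivative[OF this] pd_rho_eq[OF this] show ?thesis by (simp add: pd_rho_eq)
qed

lemma (in bounded_linear) pd_v:
  assumes "g differentiable (at p)"
  shows "pd_v (\<lambda>q. f (g q)) p = f (pd_v g p)"
proof -
  obtain D where "(g has_derivative D) (at p)" using assms unfolding differentiable_def by blast
  from has_derivative[OF this] pd_v_eq[OF this] show ?thesis by (simp add: pd_v_eq)
qed

lemma (in bounded_bilinear) differentiable:
  "f differentiable (at p) \<Longrightarrow> g differentiable (at p) \<Longrightarrow> (\<lambda>q. prod (f q) (g q)) differentiable (at p)"
  unfolding differentiable_def by (blast intro: FDERIV)

lemma (in bounded_bilinear) pd_rho:
  assumes "f differentiable (at p)" "g differentiable (at p)"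
  shows "pd_rho (\<lambda>q. prod (f q) (g q)) p = prod (f p) (pd_rho g p) + prod (pd_rho f p) (g p)"
proof -
  obtain Df Dg where "(f has_derivative Df) (at p)" "(g has_derivative Dg) (at p)"
    using assms unfolding differentiable_def by blast
  from FDERIV[OF this] pd_rho_eq[OF this(1)] pd_rho_eq[OF this(2)] show ?thesis
    by (simp add: pd_rho_eq)
qed

lemma (in bounded_bilinear) pd_v:
  assumes "f differentiable (at p)" "g differentiable (at p)"
  shows "pd_v (\<lambda>q. prod (f q) (g q)) p = prod (f p) (pd_v g p) + prod (pd_v f p) (g p)"
proof -
  obtain Df Dg where "(f has_derivative Df) (at p)" "(g has_derivative Dg) (at p)"
    using assms unfolding differentiable_def by blast
  from FDERIV[OF this] pd_v_eq[OF this(1)] pd_v_eq[OF this(2)] show ?thesis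
    by (simp add: pd_v_eq)
qed

section \<open>Symmetry of mixed partial derivatives\<close>

lemma vector_differentiable_bound_affine:
  fixes g :: "real \<Rightarrow> 'a::real_normed_vector"
  assumes "0 < h"
    and g': "\<And>t. t \<in> {0..h} \<Longrightarrow> (g has_vector_derivative g' t) (at t)"
    and bound: "\<And>t. t \<in> {0..h} \<Longrightarrow> norm (g' t - c) \<le> B"
  shows "norm (g h - g 0 - h *\<^sub>R c) \<le> B * h"
proof -
  have affine: "((\<lambda>t. g t - t *\<^sub>R c) has_vector_derivative g' t - c) (at t)"
    if "t \<in> {0..h}" for t
    using g'[OF that] by (auto intro!: derivative_eq_intros)
  have "continuous_on {0..h} (\<lambda>t. g t - t *\<^sub>R c)"
    using affine has_vector_derivative_continuous
    by (blast intro: continuous_at_imp_continuous_on)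
  then have "norm ((g h - h *\<^sub>R c) - (g 0 - 0 *\<^sub>R c)) \<le> B * h - B * 0"
    by (rule differentiable_bound_general[OF \<open>0 < h\<close>, of _ "\<lambda>t. B * t" "\<lambda>t. g' t - c" "\<lambda>_. B"])
      (auto intro!: derivative_eq_intros affine bound)
  then show ?thesis by (simp add: algebra_simps)
qed

lemma second_difference_tendsto:
  fixes f :: "real \<times> real \<Rightarrow> 'a::real_normed_vector"
  assumes "open U" "(x, y) \<in> U" and f: "\<And>q. q \<in> U \<Longrightarrow> f differentiable (at q)"
    and D: "(pd_rho f has_derivative D) (at (x, y))"
  shows "((\<lambda>h. (f (x + h, y + h) - f (x + h, y) - f (x, y + h) + f (x, y)) /\<^sub>R h\<^sup>2)
           \<longlongrightarrow> D (0, 1)) (at_right 0)"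
proof (rule tendstoI)
  fix e :: real assume "e > 0"
  obtain r where "r > 0" and ball: "ball (x, y) r \<subseteq> U"
    using assms(1,2) open_contains_ball by blast
  obtain d where "d > 0" and near: "\<And>q. norm (q - (x, y)) < d \<Longrightarrow>
      norm (pd_rho f q - pd_rho f (x, y) - D (q - (x, y))) \<le> e / 8 * norm (q - (x, y))"
    using D[unfolded has_derivative_at_alt] \<open>e > 0\<close> by (metis divide_pos_pos zero_less_numeral)
  have lin: "linear D" using D has_derivative_linear by blast
  have estimate: "dist ((f (x + h, y + h) - f (x + h, y) - f (x, y + h) + f (x, y)) /\<^sub>R h\<^sup>2) (D (0, 1)) < e"
    if "0 < h" "h < min r d / 2" for h
  proof -
    have small: "norm ((x + t, y + s) - (x, y)) < min r d" if "t \<in> {0..h}" "s \<in> {0..h}" for t s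
      using norm_Pair_le[of t s] that \<open>h < min r d / 2\<close> by (simp add: norm_Pair)
    have inU: "(x + t, y + s) \<in> U" if "t \<in> {0..h}" "s \<in> {0..h}" for t s
    proof -
      have "(x + t, y + s) \<in> ball (x, y) r"
        unfolding mem_ball dist_commute[of "(x, y)"] dist_norm using small[OF that] by (simp add: norm_Pair)
      then show ?thesis using ball by blast
    qed
    have rho_near: "norm (pd_rho f (x + t, y + s) - pd_rho f (x, y) - D (t, s)) \<le> e / 8 * (2 * h)"
      if "t \<in> {0..h}" "s \<in> {0..h}" for t s
    proof -
      have "norm (pd_rho f (x + t, y + s) - pd_rho f (x, y) - D (t, s)) \<le> e / 8 * norm (t, s)"
        using near[of "(x + t, y + s)"] small[OF that] by simp
      also have "\<dots> \<le> e / 8 * (2 * h)"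
        using \<open>e > 0\<close> that norm_Pair_le[of t s] by (intro mult_left_mono) (auto simp: norm_Pair)
      finally show ?thesis .
    qed
    let ?g = "\<lambda>t. f (x + t, y + h) - f (x + t, y)"
    have "norm (?g h - ?g 0 - h *\<^sub>R (h *\<^sub>R D (0, 1))) \<le> e / 2 * h * h"
    proof (rule vector_differentiable_bound_affine[OF \<open>0 < h\<close>])
      fix t assume t: "t \<in> {0..h}"
      have "(x + t, y + h) \<in> U" "(x + t, y) \<in> U"
        using inU[of t h] inU[of t 0] t \<open>0 < h\<close> by auto
      then show "(?g has_vector_derivative pd_rho f (x + t, y + h) - pd_rho f (x + t, y)) (at t)"
        by (intro has_vector_derivative_diff has_vector_derivative_pd_rho f)
      have "D (t, h) - D (t, 0) = h *\<^sub>R D (0, 1)"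
        by (simp add: linear_diff[OF lin, symmetric] linear_scale[OF lin, symmetric])
      then have "pd_rho f (x + t, y + h) - pd_rho f (x + t, y) - h *\<^sub>R D (0, 1)
          = (pd_rho f (x + t, y + h) - pd_rho f (x, y) - D (t, h))
            - (pd_rho f (x + t, y + 0) - pd_rho f (x, y) - D (t, 0))"
        by (simp add: algebra_simps)
      also have "norm \<dots> \<le> e / 8 * (2 * h) + e / 8 * (2 * h)"
        using t \<open>0 < h\<close> by (intro order.trans[OF norm_triangle_ineq4] add_mono rho_near) auto
      finally show "norm (pd_rho f (x + t, y + h) - pd_rho f (x + t, y) - h *\<^sub>R D (0, 1)) \<le> e / 2 * h"
        by simp
    qed
    then have "norm ((f (x + h, y + h) - f (x + h, y) - f (x, y + h) + f (x, y)) - (h\<^sup>2) *\<^sub>R D (0, 1))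
        \<le> e / 2 * h\<^sup>2"
      by (simp add: algebra_simps power2_eq_square)
    moreover have "(f (x + h, y + h) - f (x + h, y) - f (x, y + h) + f (x, y)) /\<^sub>R h\<^sup>2 - D (0, 1)
        = inverse (h\<^sup>2) *\<^sub>R ((f (x + h, y + h) - f (x + h, y) - f (x, y + h) + f (x, y)) - (h\<^sup>2) *\<^sub>R D (0, 1))"
      using \<open>0 < h\<close> by (simp add: scaleR_diff_right)
    ultimately have "dist ((f (x + h, y + h) - f (x + h, y) - f (x, y + h) + f (x, y)) /\<^sub>R h\<^sup>2) (D (0, 1))
        \<le> inverse (h\<^sup>2) * (e / 2 * h\<^sup>2)"
      using \<open>0 < h\<close> by (simp add: dist_norm mult_left_mono)
    also have "\<dots> = e / 2" using \<open>0 < h\<close> by simp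
    finally show ?thesis using \<open>e > 0\<close> by linarith
  qed
  show "\<forall>\<^sub>F h in at_right 0. dist ((f (x + h, y + h) - f (x + h, y) - f (x, y + h) + f (x, y)) /\<^sub>R h\<^sup>2) (D (0, 1)) < e"
    unfolding eventually_at_right_field
    using \<open>r > 0\<close> \<open>d > 0\<close> estimate by (intro exI[of _ "min r d / 2"]) auto
qed

lemma pd_rho_swap: "pd_rho (\<lambda>q. f (snd q, fst q)) = (\<lambda>q. pd_v f (snd q, fst q))"
  by (rule ext) (simp add: pd_rho_def pd_v_def)

text \<open>Young's theorem: the same second difference quotient tends to \<open>\<partial>\<^sub>v\<partial>\<^sub>\<rho> f\<close> and, after
  swapping the coordinates, to \<open>\<partial>\<^sub>\<rho>\<partial>\<^sub>v f\<close>.\<close>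

lemma pd_v_pd_rho_commute:
  fixes f :: "real \<times> real \<Rightarrow> 'a::real_normed_vector"
  assumes "open U" "p \<in> U" and f: "\<And>q. q \<in> U \<Longrightarrow> f differentiable (at q)"
    and "pd_rho f differentiable (at p)" "pd_v f differentiable (at p)"
  shows "pd_v (pd_rho f) p = pd_rho (pd_v f) p"
proof -
  obtain D1 D2 where D1: "(pd_rho f has_derivative D1) (at p)"
    and D2: "(pd_v f has_derivative D2) (at p)"
    using assms(4,5) differentiable_def by blast
  obtain x y where p: "p = (x, y)" by (cases p)
  define swap :: "real \<times> real \<Rightarrow> real \<times> real" where "swap q = (snd q, fst q)" for q
  have swap_deriv: "(swap has_derivative swap) (at q)" for q
    unfolding swap_def by (auto intro!: derivative_eq_intros)
  have D2_swap: "(pd_v f has_derivative D2) (at (swap (y, x)))"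
    using D2 p by (simp add: swap_def)
  have "open (swap -` U)"
    unfolding swap_def by (intro continuous_open_vimage assms(1) continuous_intros)
  moreover have "(f \<circ> swap) differentiable (at q)" if "q \<in> swap -` U" for q
  proof (rule differentiable_chain_at)
    show "swap differentiable (at q)" using swap_deriv differentiable_def by blast
    show "f differentiable (at (swap q))" using f that by simp
  qed
  moreover have "(pd_rho (f \<circ> swap) has_derivative D2 \<circ> swap) (at (y, x))"
    using has_derivative_compose[OF swap_deriv D2_swap] pd_rho_swap[of f]
    by (simp add: swap_def o_def)
  moreover have "(y, x) \<in> swap -` U" using assms(2) p by (simp add: swap_def)
  ultimately have "((\<lambda>h. ((f \<circ> swap) (y + h, x + h) - (f \<circ> swap) (y + h, x) - (f \<circ> swap) (y, x + h)
      + (f \<circ> swap) (y, x)) /\<^sub>R h\<^sup>2) \<longlongrightarrow> (D2 \<circ> swap) (0, 1)) (at_right 0)"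
    by (intro second_difference_tendsto)
  then have "((\<lambda>h. (f (x + h, y + h) - f (x + h, y) - f (x, y + h) + f (x, y)) /\<^sub>R h\<^sup>2)
      \<longlongrightarrow> D2 (1, 0)) (at_right 0)"
    by (simp add: swap_def algebra_simps)
  moreover have "((\<lambda>h. (f (x + h, y + h) - f (x + h, y) - f (x, y + h) + f (x, y)) /\<^sub>R h\<^sup>2)
      \<longlongrightarrow> D1 (0, 1)) (at_right 0)"
    using assms(2) p by (intro second_difference_tendsto[OF assms(1) _ f]) (simp_all add: D1[unfolded p])
  ultimately have "D1 (0, 1) = D2 (1, 0)"
    by (rule tendsto_unique[OF trivial_limit_at_right_real, rotated])
  then show ?thesis using pd_v_eq[OF D1] pd_rho_eq[OF D2] by simp
qed

lemma bounded_bilinear_matrix_mult: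
  "bounded_bilinear ((**) :: 'a::{euclidean_space, real_algebra_1}^'n^'m \<Rightarrow> 'a^'k^'n \<Rightarrow> 'a^'k^'m)"
  unfolding bilinear_conv_bounded_bilinear[symmetric] bilinear_def
  by (auto intro!: linearI simp: matrix_matrix_mult_def vec_eq_iff sum.distrib scaleR_sum_right
      algebra_simps)

lemmas pd_rho_matrix_mult = bounded_bilinear.pd_rho[OF bounded_bilinear_matrix_mult]

lemmas pd_v_matrix_mult = bounded_bilinear.pd_v[OF bounded_bilinear_matrix_mult]

lemmas differentiable_matrix_mult = bounded_bilinear.differentiable[OF bounded_bilinear_matrix_mult]

lemmas matrix_mult_diff_left = bounded_bilinear.diff_left[OF bounded_bilinear_matrix_mult]

lemmas matrix_mult_diff_right = bounded_bilinear.diff_right[OF bounded_bilinear_matrix_mult]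

lemma matrix_inv_left: "invertible A \<Longrightarrow> matrix_inv A ** A = mat 1"
  unfolding invertible_def matrix_inv_def by (rule someI2_ex) auto

lemma matrix_inv_right: "invertible A \<Longrightarrow> A ** matrix_inv A = mat 1"
  unfolding invertible_def matrix_inv_def by (rule someI2_ex) auto

lemma invertible_matrix_mult_left_cancel:
  assumes "invertible A" "A ** B = A ** C"
  shows "B = C"
  by (metis assms matrix_inv_left matrix_mul_assoc matrix_mul_lid)

lemma invertible_matrix_mult_right_cancel:
  assumes "invertible A" "B ** A = C ** A"
  shows "B = C"
  by (metis assms matrix_inv_right matrix_mul_assoc matrix_mul_rid)

lemma cmat_nth [simp]: "cmat c A $ i $ j = c * A $ i $ j"
  by (simp add: cmat_def)

lemma cmat_1 [simp]: "cmat 1 A = A"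
  by (simp add: vec_eq_iff)

lemma cmat_0 [simp]: "cmat 0 A = 0"
  by (simp add: vec_eq_iff)

lemma cmat_cmat: "cmat c (cmat d A) = cmat (c * d) A"
  by (simp add: vec_eq_iff)

lemma scaleR_cmat: "r *\<^sub>R A = cmat (of_real r) A"
  by (simp add: vec_eq_iff) (simp add: scaleR_conv_of_real)

lemma cmat_matrix_mult_left: "cmat c A ** B = cmat c (A ** B)"
  by (simp add: matrix_matrix_mult_def vec_eq_iff sum_distrib_left mult.assoc)

lemma cmat_matrix_mult_right: "A ** cmat c B = cmat c (A ** B)"
  by (simp add: matrix_matrix_mult_def vec_eq_iff sum_distrib_left mult.left_commute)

lemma bounded_bilinear_cmat: "bounded_bilinear (cmat :: complex \<Rightarrow> complex^'n::finite^'n \<Rightarrow> _)"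
  unfolding bilinear_conv_bounded_bilinear[symmetric] bilinear_def
  by (auto intro!: linearI simp: vec_eq_iff algebra_simps)

lemmas pd_rho_cmat = bounded_bilinear.pd_rho[OF bounded_bilinear_cmat]

lemmas pd_v_cmat = bounded_bilinear.pd_v[OF bounded_bilinear_cmat]

lemmas differentiable_cmat = bounded_bilinear.differentiable[OF bounded_bilinear_cmat]

section \<open>Integrability of logarithmic derivatives\<close>

lemma flat_connection_left:
  fixes M A1 A2 :: "real \<times> real \<Rightarrow> 'a::{euclidean_space, real_algebra_1}^'n^'n"
  assumes "open U" "p \<in> U"
    and M: "\<And>q. q \<in> U \<Longrightarrow> M differentiable (at q)"
      "pd_rho M differentiable (at p)" "pd_v M differentiable (at p)"
    and A: "A1 differentiable (at p)" "A2 differentiable (at p)"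
    and MA: "\<And>q. q \<in> U \<Longrightarrow> M q ** A1 q = pd_rho M q" "\<And>q. q \<in> U \<Longrightarrow> M q ** A2 q = pd_v M q"
    and "invertible (M p)"
  shows "pd_v A1 p - pd_rho A2 p = A1 p ** A2 p - A2 p ** A1 p"
proof -
  have "M p ** pd_v A1 p + pd_v M p ** A1 p = pd_v (pd_rho M) p"
    using pd_v_matrix_mult[OF M(1) A(1)] pd_v_cong_open[OF assms(1,2) MA(1)] assms(2) by simp
  moreover have "M p ** pd_rho A2 p + pd_rho M p ** A2 p = pd_rho (pd_v M) p"
    using pd_rho_matrix_mult[OF M(1) A(2)] pd_rho_cong_open[OF assms(1,2) MA(2)] assms(2) by simp
  moreover have "pd_v (pd_rho M) p = pd_rho (pd_v M) p"
    by (rule pd_v_pd_rho_commute[OF assms(1,2) M])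
  ultimately have "M p ** (pd_v A1 p - pd_rho A2 p) = pd_rho M p ** A2 p - pd_v M p ** A1 p"
    by (simp add: matrix_mult_diff_right algebra_simps)
  also have "\<dots> = M p ** (A1 p ** A2 p - A2 p ** A1 p)"
    using MA assms(2) by (simp add: matrix_mult_diff_right matrix_mul_assoc)
  finally show ?thesis
    using invertible_matrix_mult_left_cancel[OF \<open>invertible (M p)\<close>] by blast
qed

lemma flat_connection_right:
  fixes X Z W :: "real \<times> real \<Rightarrow> 'a::{euclidean_space, real_algebra_1}^'n^'n"
  assumes "open U" "p \<in> U"
    and X: "\<And>q. q \<in> U \<Longrightarrow> X differentiable (at q)"
      "pd_rho X differentiable (at p)" "pd_v X differentiable (at p)"
    and ZW: "Z differentiable (at p)" "W differentiable (at p)"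
    and ZWX: "\<And>q. q \<in> U \<Longrightarrow> Z q ** X q = pd_rho X q" "\<And>q. q \<in> U \<Longrightarrow> W q ** X q = pd_v X q"
    and "invertible (X p)"
  shows "pd_v Z p - pd_rho W p = W p ** Z p - Z p ** W p"
proof -
  have "Z p ** pd_v X p + pd_v Z p ** X p = pd_v (pd_rho X) p"
    using pd_v_matrix_mult[OF ZW(1) X(1)] pd_v_cong_open[OF assms(1,2) ZWX(1)] assms(2) by simp
  moreover have "W p ** pd_rho X p + pd_rho W p ** X p = pd_rho (pd_v X) p"
    using pd_rho_matrix_mult[OF ZW(2) X(1)] pd_rho_cong_open[OF assms(1,2) ZWX(2)] assms(2) by simp
  moreover have "pd_v (pd_rho X) p = pd_rho (pd_v X) p"
    by (rule pd_v_pd_rho_commute[OF assms(1,2) X])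
  ultimately have "(pd_v Z p - pd_rho W p) ** X p = W p ** pd_rho X p - Z p ** pd_v X p"
    by (simp add: matrix_mult_diff_left algebra_simps)
  also have "\<dots> = (W p ** Z p - Z p ** W p) ** X p"
    using ZWX assms(2) by (simp add: matrix_mult_diff_left flip: matrix_mul_assoc)
  finally show ?thesis
    using invertible_matrix_mult_right_cancel[OF \<open>invertible (X p)\<close>] by blast
qed

definition right_log_derivative :: "(real \<times> real \<Rightarrow> complex^'n::finite^'n) \<Rightarrow> 'n mform" where
  "right_log_derivative X = ((\<lambda>p. pd_rho X p ** matrix_inv (X p)), (\<lambda>p. pd_v X p ** matrix_inv (X p)))"

lemma right_log_derivative_flat:
  fixes X :: "real \<times> real \<Rightarrow> complex^'n::finite^'n"
  assumes "open U" "p \<in> U" "Ck_on 2 U X" "Ck_on 1 U (\<lambda>q. matrix_inv (X q))" "\<forall>q\<in>U. invertible (X q)"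
  defines "R \<equiv> right_log_derivative X"
  shows "fst R differentiable (at p)" "snd R differentiable (at p)"
    and "pd_v (fst R) p - pd_rho (snd R) p = snd R p ** fst R p - fst R p ** snd R p"
proof -
  have X: "\<And>q. q \<in> U \<Longrightarrow> X differentiable (at q)" "pd_rho X differentiable (at p)"
      "pd_v X differentiable (at p)" and "(\<lambda>q. matrix_inv (X q)) differentiable (at p)"
    using assms(2-4) by (simp_all add: numeral_2_eq_2)
  then show R: "fst R differentiable (at p)" "snd R differentiable (at p)"
    by (simp_all add: R_def right_log_derivative_def differentiable_matrix_mult)
  have "\<And>q. q \<in> U \<Longrightarrow> matrix_inv (X q) ** X q = mat 1" using assms(5) matrix_inv_left by blast
  then show "pd_v (fst R) p - pd_rho (snd R) p = snd R p ** fst R p - fst R p ** snd R p"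
    using assms(2,5) by (intro flat_connection_right[OF assms(1,2) X R])
      (simp_all add: R_def right_log_derivative_def flip: matrix_mul_assoc)
qed

lemma maurer_cartan_flat:
  fixes M :: "real \<times> real \<Rightarrow> complex^'n::finite^'n"
  assumes "open U" "p \<in> U" "Ck_on 2 U M" "\<forall>q\<in>U. invertible (M q)"
  defines "A \<equiv> maurer_cartan M"
  assumes "fst A differentiable (at p)" "snd A differentiable (at p)"
  shows "pd_v (fst A) p - pd_rho (snd A) p = fst A p ** snd A p - snd A p ** fst A p"
proof -
  have M: "\<And>q. q \<in> U \<Longrightarrow> M differentiable (at q)" "pd_rho M differentiable (at p)"
      "pd_v M differentiable (at p)"
    using assms(2,3) by (simp_all add: numeral_2_eq_2)
  have "\<And>q. q \<in> U \<Longrightarrow> M q ** matrix_inv (M q) = mat 1" using assms(4) matrix_inv_right by blast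
  then show ?thesis
    using assms(2,4) by (intro flat_connection_left[OF assms(1,2) M assms(6,7)])
      (simp_all add: A_def maurer_cartan_def matrix_mul_assoc)
qed

section \<open>The linear system\<close>

lemma linear_system_solve:
  fixes X P B R :: "complex^'n::finite^'n"
  assumes "c \<noteq> 0" "invertible X" "cmat c (P + B ** X) = R"
  shows "B = cmat (inverse c) (R ** matrix_inv X) - P ** matrix_inv X"
proof -
  have "P + B ** X = cmat (inverse c) R"
    using assms(1,3) by (auto simp: cmat_cmat)
  then have "P ** matrix_inv X + B = cmat (inverse c) R ** matrix_inv X"
    using matrix_inv_right[OF assms(2)]
    by (metis bounded_bilinear.add_left[OF bounded_bilinear_matrix_mult] matrix_mul_assoc matrix_mul_rid)
  then show ?thesis by (simp add: cmat_matrix_mult_left algebra_simps)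
qed

lemma linear_system_connection:
  fixes \<phi> :: "real \<times> real \<Rightarrow> complex" and A :: "'n::finite mform"
  assumes "form_eq_on U (form_scale \<phi> (form_add (d0 X) (form_rmult A X))) (hodge \<sigma> (d0 X))"
    and "q \<in> U" "\<phi> q \<noteq> 0" "invertible (X q)"
  defines "R \<equiv> right_log_derivative X"
  shows "fst A q = cmat (inverse (\<phi> q)) (snd R q) - fst R q"
    and "snd A q = cmat (- of_real \<sigma> * inverse (\<phi> q)) (fst R q) - snd R q"
proof -
  have "cmat (\<phi> q) (pd_rho X q + fst A q ** X q) = pd_v X q"
    and "cmat (\<phi> q) (pd_v X q + snd A q ** X q) = cmat (- of_real \<sigma>) (pd_rho X q)"
    using assms(1,2)
    by (auto simp: form_eq_on_def form_scale_def form_add_def d0_def form_rmult_def hodge_def scaleR_cmat)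
  from linear_system_solve[OF assms(3,4) this(1)] linear_system_solve[OF assms(3,4) this(2)]
  show "fst A q = cmat (inverse (\<phi> q)) (snd R q) - fst R q"
    and "snd A q = cmat (- of_real \<sigma> * inverse (\<phi> q)) (fst R q) - snd R q"
    by (simp_all add: R_def right_log_derivative_def cmat_matrix_mult_left cmat_cmat mult.commute)
qed

lemma commutator_ansatz:
  fixes W Z :: "complex^'n::finite^'n"
  shows "(cmat b W - Z) ** (cmat (- s * b) Z - W) - (cmat (- s * b) Z - W) ** (cmat b W - Z)
    = cmat (- (1 + s * b\<^sup>2)) (W ** Z - Z ** W)"
  by (simp add: matrix_mult_diff_left matrix_mult_diff_right cmat_matrix_mult_left
      cmat_matrix_mult_right cmat_cmat vec_eq_iff algebra_simps power2_eq_square)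

lemma ansatz_differentiable:
  fixes A :: "'n::finite mform" and b :: "real \<times> real \<Rightarrow> complex"
  assumes "open U" "p \<in> U"
    and diff: "b differentiable (at p)" "Z differentiable (at p)" "W differentiable (at p)"
    and A: "\<And>q. q \<in> U \<Longrightarrow> fst A q = cmat (b q) (W q) - Z q"
      "\<And>q. q \<in> U \<Longrightarrow> snd A q = cmat (c * b q) (Z q) - W q"
  shows "fst A differentiable (at p)" "snd A differentiable (at p)"
proof -
  have "(\<lambda>q. cmat (b q) (W q) - Z q) differentiable (at p)"
    "(\<lambda>q. cmat (c * b q) (Z q) - W q) differentiable (at p)"
    using diff by (auto intro!: differentiable_diff differentiable_cmat)
  then show "fst A differentiable (at p)" "snd A differentiable (at p)"
    using differentiable_transform_open[OF _ assms(1,2)] A by (metis (no_types, lifting))+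
qed

section \<open>The spectral parameter\<close>

lemma weyl_branch_inverse_quadratic:
  fixes \<phi> \<omega> v r \<epsilon> s \<sigma> :: complex
  assumes "\<sigma> * \<sigma> = 1" "\<epsilon> * \<epsilon> = 1" "r \<noteq> 0" "\<phi> \<noteq> 0"
    and "s\<^sup>2 = (\<omega> - v)\<^sup>2 + \<sigma> * r\<^sup>2" "\<phi> = (- \<sigma> * (\<omega> - v) + \<epsilon> * s) / r"
  shows "r * (inverse \<phi>)\<^sup>2 - 2 * (\<omega> - v) * inverse \<phi> - \<sigma> * r = 0"
proof -
  have "\<phi> * r = - \<sigma> * (\<omega> - v) + \<epsilon> * s" using assms(3,6) by simp
  moreover have "inverse \<phi> * \<phi> = 1" using assms(4) by simp
  ultimately show ?thesis using assms(1,2,3,5) by algebra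
qed

lemma quadratic_relation_pd:
  fixes b :: "real \<times> real \<Rightarrow> complex" and \<omega> \<sigma> :: complex
  assumes "open U" "p \<in> U" "b differentiable (at p)"
    and rel: "\<And>q. q \<in> U \<Longrightarrow>
      of_real (fst q) * (b q)\<^sup>2 - 2 * (\<omega> - of_real (snd q)) * b q - \<sigma> * of_real (fst q) = 0"
  shows "of_real (fst p) * ((b p)\<^sup>2 + \<sigma>) * pd_rho b p = b p * (\<sigma> - (b p)\<^sup>2)"
    and "of_real (fst p) * ((b p)\<^sup>2 + \<sigma>) * pd_v b p = - 2 * (b p)\<^sup>2"
proof -
  obtain Db where Db: "(b has_derivative Db) (at p)"
    using assms(3) unfolding differentiable_def by blast
  define G where "G q = of_real (fst q) * (b q)\<^sup>2 - 2 * (\<omega> - of_real (snd q)) * b q - \<sigma> * of_real (fst q)"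
    for q
  have G': "(G has_derivative (\<lambda>h. of_real (fst h) * (b p)\<^sup>2 + of_real (fst p) * (2 * b p * Db h)
      - 2 * (\<omega> - of_real (snd p)) * Db h + 2 * of_real (snd h) * b p - \<sigma> * of_real (fst h))) (at p)"
    unfolding G_def by (auto intro!: derivative_eq_intros Db simp: algebra_simps power2_eq_square)
  have "pd_rho G p = 0" "pd_v G p = 0"
    using pd_rho_cong_open[OF assms(1,2), of G "\<lambda>_. 0"] pd_v_cong_open[OF assms(1,2), of G "\<lambda>_. 0"] rel
    by (simp_all add: G_def)
  then have "(b p)\<^sup>2 + of_real (fst p) * (2 * b p * pd_rho b p) - 2 * (\<omega> - of_real (snd p)) * pd_rho b p
        - \<sigma> = 0"
    and "of_real (fst p) * (2 * b p * pd_v b p) - 2 * (\<omega> - of_real (snd p)) * pd_v b p + 2 * b p = 0"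
    unfolding pd_rho_eq[OF G'] pd_v_eq[OF G'] pd_rho_eq[OF Db] pd_v_eq[OF Db] by simp_all
  with rel[OF assms(2)] show "of_real (fst p) * ((b p)\<^sup>2 + \<sigma>) * pd_rho b p = b p * (\<sigma> - (b p)\<^sup>2)"
    and "of_real (fst p) * ((b p)\<^sup>2 + \<sigma>) * pd_v b p = - 2 * (b p)\<^sup>2"
    by algebra+
qed

lemma weyl_branch_inverse:
  fixes \<phi> s :: "real \<times> real \<Rightarrow> complex" and \<omega> \<epsilon> :: complex
  assumes "\<sigma> * \<sigma> = 1" "open U" "U \<subseteq> weyl_half_plane" "p \<in> U" "Cinf_on U \<phi>" "\<epsilon> \<in> {1, -1}"
    and s: "\<forall>q\<in>U. (s q)\<^sup>2 = (\<omega> - of_real (snd q))\<^sup>2 + of_real \<sigma> * (of_real (fst q))\<^sup>2"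
    and \<phi>: "\<forall>q\<in>U. \<phi> q = (- of_real \<sigma> * (\<omega> - of_real (snd q)) + \<epsilon> * s q) / of_real (fst q)"
    and nonzero: "\<forall>q\<in>U. \<phi> q \<noteq> 0" "\<forall>q\<in>U. (\<phi> q)\<^sup>2 + of_real \<sigma> \<noteq> 0"
  shows "(\<lambda>q. inverse (\<phi> q)) differentiable (at p)"
    and "inverse (\<phi> p) \<noteq> 0" "(inverse (\<phi> p))\<^sup>2 + of_real \<sigma> \<noteq> 0"
    and "of_real (fst p) * ((inverse (\<phi> p))\<^sup>2 + of_real \<sigma>) * pd_rho (\<lambda>q. inverse (\<phi> q)) p
      = inverse (\<phi> p) * (of_real \<sigma> - (inverse (\<phi> p))\<^sup>2)"
    and "of_real (fst p) * ((inverse (\<phi> p))\<^sup>2 + of_real \<sigma>) * pd_v (\<lambda>q. inverse (\<phi> q)) p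
      = - 2 * (inverse (\<phi> p))\<^sup>2"
proof -
  have \<sigma>: "of_real \<sigma> * of_real \<sigma> = (1 :: complex)" using assms(1) by (simp flip: of_real_mult)
  have "\<phi> differentiable (at p)" using assms(4,5) by (auto simp: Cinf_on_def dest: spec[of _ 1])
  then show diff: "(\<lambda>q. inverse (\<phi> q)) differentiable (at p)"
    using nonzero(1) assms(4) by (auto intro: differentiable_compose[of inverse]
        simp: field_differentiable_imp_differentiable)
  have "of_real (fst q) * (inverse (\<phi> q))\<^sup>2 - 2 * (\<omega> - of_real (snd q)) * inverse (\<phi> q)
      - of_real \<sigma> * of_real (fst q) = 0" if "q \<in> U" for q
    using that s \<phi> nonzero(1) assms(3,6) \<sigma>
    by (intro weyl_branch_inverse_quadratic) (auto simp: weyl_half_plane_def)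
  from quadratic_relation_pd[OF assms(2,4) diff this]
  show "of_real (fst p) * ((inverse (\<phi> p))\<^sup>2 + of_real \<sigma>) * pd_rho (\<lambda>q. inverse (\<phi> q)) p
      = inverse (\<phi> p) * (of_real \<sigma> - (inverse (\<phi> p))\<^sup>2)"
    and "of_real (fst p) * ((inverse (\<phi> p))\<^sup>2 + of_real \<sigma>) * pd_v (\<lambda>q. inverse (\<phi> q)) p
      = - 2 * (inverse (\<phi> p))\<^sup>2"
    by simp_all
  have "inverse (\<phi> p) * \<phi> p = 1" using nonzero(1) assms(4) by simp
  then have "(inverse (\<phi> p))\<^sup>2 + of_real \<sigma> = of_real \<sigma> * ((\<phi> p)\<^sup>2 + of_real \<sigma>) * (inverse (\<phi> p))\<^sup>2"
    using \<sigma> by algebra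
  then show "inverse (\<phi> p) \<noteq> 0" "(inverse (\<phi> p))\<^sup>2 + of_real \<sigma> \<noteq> 0"
    using nonzero assms(4) \<sigma> by auto
qed

section \<open>The field equation\<close>

lemma field_equation_scalar:
  fixes b br bv r s w z wr wv zr zv c :: complex
  assumes "s * s = 1" "b \<noteq> 0" "b\<^sup>2 + s \<noteq> 0"
    and "r * (b\<^sup>2 + s) * br = b * (s - b\<^sup>2)" "r * (b\<^sup>2 + s) * bv = - 2 * b\<^sup>2"
    and "zv - wr = c"
    and "(b * wv + bv * w - zv) - (- s * b * zr - s * br * z - wr) = - (1 + s * b\<^sup>2) * c"
  shows "r * (- s * (b * wr + br * w - zr)) - s * (b * w - z) - r * (- s * b * zv - s * bv * z - wv) = 0"
  using assms by algebra

lemma field_equation_algebra: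
  fixes Z W Zr Zv Wr Wv C :: "complex^'n::finite^'n" and b br bv r s :: complex
  assumes "s * s = 1" "b \<noteq> 0" "b\<^sup>2 + s \<noteq> 0"
    and "r * (b\<^sup>2 + s) * br = b * (s - b\<^sup>2)" "r * (b\<^sup>2 + s) * bv = - 2 * b\<^sup>2"
    and compat: "Zv - Wr = C"
    and flat: "(cmat b Wv + cmat bv W - Zv) - (cmat (- s * b) Zr + cmat (- s * br) Z - Wr)
      = cmat (- (1 + s * b\<^sup>2)) C"
  shows "cmat r (cmat (- s) (cmat b Wr + cmat br W - Zr)) + cmat (- s) (cmat b W - Z)
    - cmat r (cmat (- s * b) Zv + cmat (- s * bv) Z - Wv) = 0"
proof -
  have "r * (- s * (b * Wr $ i $ j + br * W $ i $ j - Zr $ i $ j)) - s * (b * W $ i $ j - Z $ i $ j)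
      - r * (- s * b * Zv $ i $ j - s * bv * Z $ i $ j - Wv $ i $ j) = 0" for i j
  proof (rule field_equation_scalar[OF assms(1-5)])
    show "Zv $ i $ j - Wr $ i $ j = C $ i $ j"
      using arg_cong[OF compat, of "\<lambda>A. A $ i $ j"] by simp
    show "(b * Wv $ i $ j + bv * W $ i $ j - Zv $ i $ j)
        - (- s * b * Zr $ i $ j - s * br * Z $ i $ j - Wr $ i $ j) = - (1 + s * b\<^sup>2) * C $ i $ j"
      using arg_cong[OF flat, of "\<lambda>A. A $ i $ j"] by (simp add: algebra_simps)
  qed
  then show ?thesis by (simp add: vec_eq_iff algebra_simps)
qed

lemma field_equation_from_ansatz:
  fixes A :: "'n::finite mform" and b :: "real \<times> real \<Rightarrow> complex" and Z W :: "real \<times> real \<Rightarrow> complex^'n^'n"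
  assumes "open U" "p \<in> U" "\<sigma> * \<sigma> = 1"
    and diff: "b differentiable (at p)" "Z differentiable (at p)" "W differentiable (at p)"
    and A: "\<And>q. q \<in> U \<Longrightarrow> fst A q = cmat (b q) (W q) - Z q"
      "\<And>q. q \<in> U \<Longrightarrow> snd A q = cmat (- of_real \<sigma> * b q) (Z q) - W q"
    and compat: "pd_v Z p - pd_rho W p = W p ** Z p - Z p ** W p"
    and flat: "pd_v (fst A) p - pd_rho (snd A) p = fst A p ** snd A p - snd A p ** fst A p"
    and nonzero: "b p \<noteq> 0" "(b p)\<^sup>2 + of_real \<sigma> \<noteq> 0"
    and pde: "of_real (fst p) * ((b p)\<^sup>2 + of_real \<sigma>) * pd_rho b p = b p * (of_real \<sigma> - (b p)\<^sup>2)"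
      "of_real (fst p) * ((b p)\<^sup>2 + of_real \<sigma>) * pd_v b p = - 2 * (b p)\<^sup>2"
  shows "d1 (form_scale (\<lambda>q. of_real (fst q)) (hodge \<sigma> A)) p = 0"
proof -
  let ?s = "complex_of_real \<sigma>"
  have sb: "(\<lambda>q. - ?s * b q) differentiable (at p)" using diff(1) by simp
  have dA: "fst A differentiable (at p)" "snd A differentiable (at p)"
    using ansatz_differentiable[OF assms(1,2) diff A] by blast+
  have "pd_rho (fst A) p = pd_rho (\<lambda>q. cmat (b q) (W q) - Z q) p"
    "pd_v (fst A) p = pd_v (\<lambda>q. cmat (b q) (W q) - Z q) p"
    "pd_rho (snd A) p = pd_rho (\<lambda>q. cmat (- ?s * b q) (Z q) - W q) p"
    "pd_v (snd A) p = pd_v (\<lambda>q. cmat (- ?s * b q) (Z q) - W q) p"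
    by (auto intro!: pd_rho_cong_open[OF assms(1,2)] pd_v_cong_open[OF assms(1,2)] simp: A)
  moreover have "pd_rho (\<lambda>q. - (?s * b q)) p = - (?s * pd_rho b p)"
    "pd_v (\<lambda>q. - (?s * b q)) p = - (?s * pd_v b p)"
    using bounded_linear.pd_rho[OF bounded_linear_mult_right diff(1), of "- ?s"]
      bounded_linear.pd_v[OF bounded_linear_mult_right diff(1), of "- ?s"] by simp_all
  ultimately have dA1: "pd_rho (fst A) p = cmat (b p) (pd_rho W p) + cmat (pd_rho b p) (W p) - pd_rho Z p"
    "pd_v (fst A) p = cmat (b p) (pd_v W p) + cmat (pd_v b p) (W p) - pd_v Z p"
    and dA2: "pd_rho (snd A) p = cmat (- ?s * b p) (pd_rho Z p) + cmat (- ?s * pd_rho b p) (Z p) - pd_rho W p"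
    "pd_v (snd A) p = cmat (- ?s * b p) (pd_v Z p) + cmat (- ?s * pd_v b p) (Z p) - pd_v W p"
    using diff sb by (simp_all add: pd_rho_diff pd_v_diff pd_rho_cmat pd_v_cmat differentiable_cmat)
  have comm: "fst A p ** snd A p - snd A p ** fst A p = cmat (- (1 + ?s * (b p)\<^sup>2)) (W p ** Z p - Z p ** W p)"
    unfolding A(1)[OF assms(2)] A(2)[OF assms(2)] by (rule commutator_ansatz)
  have "cmat (of_real (fst p)) (cmat (- ?s) (pd_rho (fst A) p)) + cmat (- ?s) (fst A p)
      - cmat (of_real (fst p)) (pd_v (snd A) p) = 0"
    unfolding dA1(1) dA2(2) A(1)[OF assms(2)]
  proof (rule field_equation_algebra[OF _ nonzero pde compat])
    show "?s * ?s = 1" using assms(3) by (simp flip: of_real_mult)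
    show "cmat (b p) (pd_v W p) + cmat (pd_v b p) (W p) - pd_v Z p
        - (cmat (- ?s * b p) (pd_rho Z p) + cmat (- ?s * pd_rho b p) (Z p) - pd_rho W p)
      = cmat (- (1 + ?s * (b p)\<^sup>2)) (W p ** Z p - Z p ** W p)"
      using flat unfolding dA1(2) dA2(1) comm .
  qed
  moreover have "(\<lambda>q. complex_of_real (fst q)) differentiable (at p)"
    unfolding differentiable_def by (auto intro!: derivative_eq_intros exI)
  then have "d1 (form_scale (\<lambda>q. of_real (fst q)) (hodge \<sigma> A)) p
      = cmat (of_real (fst p)) (cmat (- ?s) (pd_rho (fst A) p)) + cmat (- ?s) (fst A p)
        - cmat (of_real (fst p)) (pd_v (snd A) p)"
    unfolding d1_def form_scale_def hodge_def
    by (simp add: pd_rho_cmat pd_v_cmat dA differentiable_cmat scaleR_cmat)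
  ultimately show ?thesis by simp
qed

theorem mainTheorem7:
  fixes \<sigma> :: real and U :: "(real \<times> real) set" and \<phi> :: "real \<times> real \<Rightarrow> complex"
    and M X :: "real \<times> real \<Rightarrow> complex^'n^'n"
  assumes sigma: "\<sigma> \<in> {1, -1}"
    and U_open: "open U" and U_sub: "U \<subseteq> weyl_half_plane"
    and phi_smooth: "Cinf_on U \<phi>"
    and phi_form: "\<exists>\<omega>::complex. \<exists>s::real \<times> real \<Rightarrow> complex. \<exists>\<epsilon>::complex. \<epsilon> \<in> {1, -1}
        \<and> continuous_on U s
        \<and> (\<forall>p\<in>U. (s p)\<^sup>2 = (\<omega> - of_real (snd p))\<^sup>2 + of_real \<sigma> * (of_real (fst p))\<^sup>2)
        \<and> (\<forall>p\<in>U. \<phi> p = (- of_real \<sigma> * (\<omega> - of_real (snd p)) + \<epsilon> * s p) / of_real (fst p))"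
    and phi_nz: "\<forall>p\<in>U. \<phi> p \<noteq> 0"
    and phi_sq: "\<forall>p\<in>U. (\<phi> p)\<^sup>2 + of_real \<sigma> \<noteq> 0"
    and M_inv: "\<forall>p\<in>U. invertible (M p)" and M_C2: "Ck_on 2 U M"
    and X_inv: "\<forall>p\<in>U. invertible (X p)" and X_C2: "Ck_on 2 U X"
    and Xinv_C1: "Ck_on 1 U (\<lambda>p. matrix_inv (X p))"
    and BM: "form_eq_on U (form_scale \<phi> (form_add (d0 X) (form_rmult (maurer_cartan M) X)))
                          (hodge \<sigma> (d0 X))"
  shows "\<forall>p\<in>U. d1 (form_scale (\<lambda>q. of_real (fst q)) (hodge \<sigma> (maurer_cartan M))) p = 0"
proof
  fix p assume p: "p \<in> U"
  have \<sigma>: "\<sigma> * \<sigma> = 1" using sigma by auto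
  (* Only the pointwise quadratic relation of the branch s is used, not its continuity. *)
  obtain \<omega> s \<epsilon> where "\<epsilon> \<in> {1, -1}"
    and "\<forall>q\<in>U. (s q)\<^sup>2 = (\<omega> - of_real (snd q))\<^sup>2 + of_real \<sigma> * (of_real (fst q))\<^sup>2"
    and "\<forall>q\<in>U. \<phi> q = (- of_real \<sigma> * (\<omega> - of_real (snd q)) + \<epsilon> * s q) / of_real (fst q)"
    using phi_form by blast
  note b = weyl_branch_inverse[OF \<sigma> U_open U_sub p phi_smooth this phi_nz phi_sq]
  define R where "R = right_log_derivative X"
  note R = right_log_derivative_flat[OF U_open p X_C2 Xinv_C1 X_inv, folded R_def]
  have A: "\<And>q. q \<in> U \<Longrightarrow> fst (maurer_cartan M) q = cmat (inverse (\<phi> q)) (snd R q) - fst R q"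
    "\<And>q. q \<in> U \<Longrightarrow> snd (maurer_cartan M) q = cmat (- of_real \<sigma> * inverse (\<phi> q)) (fst R q) - snd R q"
    using linear_system_connection[OF BM, folded R_def] phi_nz X_inv by auto
  have flat: "pd_v (fst (maurer_cartan M)) p - pd_rho (snd (maurer_cartan M)) p
      = fst (maurer_cartan M) p ** snd (maurer_cartan M) p - snd (maurer_cartan M) p ** fst (maurer_cartan M) p"
    using maurer_cartan_flat[OF U_open p M_C2 M_inv ansatz_differentiable[OF U_open p b(1) R(1,2) A]] .
  show "d1 (form_scale (\<lambda>q. of_real (fst q)) (hodge \<sigma> (maurer_cartan M))) p = 0"
    by (rule field_equation_from_ansatz[OF U_open p \<sigma> b(1) R(1,2) A R(3) flat b(2-5)])
qed

end
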